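(* Let $S$ be a strongly finitely aligned $0$-left cancellative semigroup with right local units. Let $A$ be an associative $*$-algebra and $\pi:\mathcal H(S)\to A$ a cover-to-join $*$-representation such that $\pi(\mathcal H(S))$ spans $A$; write $\pi_s=\pi(\theta_s)$ for $s\in S$. Then $A$ is spanned by the elements $\pi_s\pi(f_\Lambda)\pi_t^*$ with $\Lambda\subseteq S$ finite and $s,t\in\Lambda$. If moreover $S$ is right reductive and categorical at zero, then $A$ is spanned by the elements $\pi_s\pi_t^*$ with $s,t\in S$.
   Context: $S$ has zero $0$, $S'=S\setminus\{0\}$; $0$-left cancellative: $st=sr\ne0\Rightarrow t=r$; right local units: each $s$ has an idempotent $e$ with $se=s$; right reductive: $sx=tx$ for all $x$ implies $s=t$; categorical at zero: $rs\ne0$, $st\ne0\Rightarrow rst\ne0$. Strongly finitely aligned: for all $s,t\in S$ there is a finite (possibly empty) $B\subseteq S'$ with $sS\cap tS=\bigcup_{b\in B}bS$ (read as $\{0\}$ if $B=\emptyset$) and $bS\cap b'S=\{0\}$ for distinct $b,b'\in B$. For $s\in S$: $F_s=\{x\in S':sx\ne0\}$, $\theta_s:F_s\to sS\setminus\{0\}$, $x\mapsto sx$; $\mathcal H(S)$ is the inverse semigroup of partial bijections of $S'$ generated by the $\theta_s$; for finite $\Lambda\subseteq S$, $f_\Lambda=\prod_{u\in\Lambda}\theta_u^{-1}\theta_u$ (identity on $\bigcap_{u\in\Lambda}F_u$). A $*$-representation is a map $\pi:\mathcal H(S)\to A$ with $\pi(0)=0$, $\pi(gh)=\pi(g)\pi(h)$,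 $\pi(g^{-1})=\pi(g)^*$. For an idempotent $e$ of $\mathcal H(S)$, idempotents $f_1,\dots,f_n\le e$ form a cover of $e$ if every nonzero idempotent $h\le e$ satisfies $hf_i\ne0$ for some $i$. $\pi$ is cover-to-join if for every such cover, $\prod_{i=1}^n(\pi(e)-\pi(f_i))=0$. *)

theory Defs
  imports Main "HOL-Analysis.Analysis"
begin

definition rideal :: "'a::{semigroup_mult,mult_zero} \<Rightarrow> 'a set" where
  "rideal s = {s * x | x. True}"

definition zero_left_cancellative :: "'a::{semigroup_mult,mult_zero} itself \<Rightarrow> bool" where
  "zero_left_cancellative _ \<longleftrightarrow> (\<forall>s t r::'a. s * t = s * r \<and> s * t \<noteq> 0 \<longrightarrow> t = r)"

definition right_local_units :: "'a::{semigroup_mult,mult_zero} itself \<Rightarrow> bool" where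
  "right_local_units _ \<longleftrightarrow> (\<forall>s::'a. \<exists>e. e * e = e \<and> s * e = s)"

definition right_reductive :: "'a::{semigroup_mult,mult_zero} itself \<Rightarrow> bool" where
  "right_reductive _ \<longleftrightarrow> (\<forall>s t::'a. (\<forall>x. s * x = t * x) \<longrightarrow> s = t)"

definition categorical_at_zero :: "'a::{semigroup_mult,mult_zero} itself \<Rightarrow> bool" where
  "categorical_at_zero _ \<longleftrightarrow> (\<forall>r s t::'a. r * s \<noteq> 0 \<and> s * t \<noteq> 0 \<longrightarrow> r * s * t \<noteq> 0)"

text \<open>sS \<inter> tS is the union of bS (b \<in> B), read as {0} if B is empty; since 0 lies in
  every bS and in sS \<inter> tS we write it as insert 0 of the union.\<close>
definition strongly_finitely_aligned :: "'a::{semigroup_mult,mult_zero} itself \<Rightarrow> bool" where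
  "strongly_finitely_aligned _ \<longleftrightarrow>
     (\<forall>s t::'a. \<exists>B. finite B \<and> 0 \<notin> B \<and>
        rideal s \<inter> rideal t = insert 0 (\<Union>b\<in>B. rideal b) \<and>
        (\<forall>b\<in>B. \<forall>b'\<in>B. b \<noteq> b' \<longrightarrow> rideal b \<inter> rideal b' = {0}))"

definition theta :: "'a::{semigroup_mult,mult_zero} \<Rightarrow> 'a \<rightharpoonup> 'a" where
  "theta s = (\<lambda>x. if x \<noteq> 0 \<and> s * x \<noteq> 0 then Some (s * x) else None)"

definition pinv :: "('a \<rightharpoonup> 'a) \<Rightarrow> ('a \<rightharpoonup> 'a)" where
  "pinv g = (\<lambda>y. if \<exists>x. g x = Some y then Some (SOME x. g x = Some y) else None)"

inductive_set HS :: "'a::{semigroup_mult,mult_zero} itself \<Rightarrow> ('a \<rightharpoonup> 'a) set"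
  for T :: "'a itself" where
  gen: "theta (s::'a) \<in> HS T"
| gen_inv: "pinv (theta (s::'a)) \<in> HS T"
| comp: "g \<in> HS T \<Longrightarrow> h \<in> HS T \<Longrightarrow> g \<circ>\<^sub>m h \<in> HS T"

definition fLam :: "'a::{semigroup_mult,mult_zero} set \<Rightarrow> 'a \<rightharpoonup> 'a" where
  "fLam \<Lambda> = (\<lambda>x. if x \<noteq> 0 \<and> (\<forall>u\<in>\<Lambda>. u * x \<noteq> 0) then Some x else None)"

definition idemH :: "'a::{semigroup_mult,mult_zero} itself \<Rightarrow> ('a \<rightharpoonup> 'a) set" where
  "idemH T = {e \<in> HS T. e \<circ>\<^sub>m e = e}"

text \<open>natural order of idempotents: f \<le> e iff f = e f\<close>
definition is_cover :: "'a::{semigroup_mult,mult_zero} itself \<Rightarrow> ('a \<rightharpoonup> 'a) \<Rightarrow> ('a \<rightharpoonup> 'a) list \<Rightarrow> bool" where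
  "is_cover T e fs \<longleftrightarrow> (\<forall>f\<in>set fs. f \<in> idemH T \<and> f = e \<circ>\<^sub>m f) \<and>
     (\<forall>h\<in>idemH T. h \<noteq> Map.empty \<and> h = e \<circ>\<^sub>m h \<longrightarrow> (\<exists>f\<in>set fs. h \<circ>\<^sub>m f \<noteq> Map.empty))"

locale star_algebra = module sc
  for sc :: "complex \<Rightarrow> 'b::ring \<Rightarrow> 'b" +
  fixes star :: "'b \<Rightarrow> 'b"
  assumes sc_mult_left: "sc c (x * y) = sc c x * y"
      and sc_mult_right: "sc c (x * y) = x * sc c y"
      and star_add: "star (x + y) = star x + star y"
      and star_sc: "star (sc c x) = sc (cnj c) (star x)"
      and star_mult: "star (x * y) = star y * star x"
      and star_star: "star (star x) = x"

text \<open>Product of a nonempty list (A need not have a unit).\<close>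
fun lprod :: "'b::times list \<Rightarrow> 'b" where
  "lprod [] = undefined"
| "lprod [x] = x"
| "lprod (x # y # ys) = x * lprod (y # ys)"

definition star_rep ::
  "'a::{semigroup_mult,mult_zero} itself \<Rightarrow> ('b::ring \<Rightarrow> 'b) \<Rightarrow> (('a \<rightharpoonup> 'a) \<Rightarrow> 'b) \<Rightarrow> bool" where
  "star_rep T star \<pi> \<longleftrightarrow> \<pi> Map.empty = 0 \<and>
     (\<forall>g\<in>HS T. \<forall>h\<in>HS T. \<pi> (g \<circ>\<^sub>m h) = \<pi> g * \<pi> h) \<and>
     (\<forall>g\<in>HS T. \<pi> (pinv g) = star (\<pi> g))"

text \<open>cover-to-join; for n = 0 a cover can only be of e = 0, where \<pi> e = 0 already, so
  covers are taken nonempty (the empty product is undefined in a non-unital algebra).\<close>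
definition cover_to_join ::
  "'a::{semigroup_mult,mult_zero} itself \<Rightarrow> (('a \<rightharpoonup> 'a) \<Rightarrow> 'b::ring) \<Rightarrow> bool" where
  "cover_to_join T \<pi> \<longleftrightarrow>
     (\<forall>e\<in>idemH T. \<forall>fs. fs \<noteq> [] \<and> is_cover T e fs \<longrightarrow> lprod (map (\<lambda>f. \<pi> e - \<pi> f) fs) = 0)"

end

theory Submission
  imports Defs
begin

text \<open>Since \<open>\<pi>(H(S))\<close> spans \<open>A\<close>, it suffices to show that the span \<open>V\<close> of the elements
  \<open>\<pi>(\<theta>\<^sub>s f\<^sub>\<Lambda> \<theta>\<^sub>t\<^sup>*)\<close>, \<open>s, t \<in> \<Lambda>\<close>, contains every \<open>\<pi>(\<theta>\<^sub>s)\<close> and \<open>\<pi>(\<theta>\<^sub>s\<^sup>*)\<close> and is invariant under left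
  multiplication by them. A right local unit \<open>e\<close> of \<open>s\<close> gives \<open>\<theta>\<^sub>s = \<theta>\<^sub>s f\<^bsub>{s,e}\<^esub> \<theta>\<^sub>e\<^sup>*\<close>, and
  \<open>\<theta>\<^sub>r \<theta>\<^sub>s f\<^sub>\<Lambda> \<theta>\<^sub>t\<^sup>*\<close> is again of this shape. For \<open>\<theta>\<^sub>r\<^sup>*\<close> one uses strong finite alignment: if
  \<open>rS \<inter> sS = \<Union>\<^sub>b bS\<close> with \<open>b = r r'\<^sub>b = s s'\<^sub>b\<close>, then the domain idempotent of \<open>\<theta>\<^sub>r\<^sup>* \<theta>\<^sub>s\<close> is covered
  by the pairwise orthogonal idempotents \<open>\<theta>\<^bsub>s'\<^sub>b\<^esub> f\<^bsub>{b}\<^esub> \<theta>\<^bsub>s'\<^sub>b\<^esub>\<^sup>*\<close>, so cover-to-join yields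
  \<open>\<pi>(\<theta>\<^sub>r\<^sup>* \<theta>\<^sub>s) = \<Sum>\<^sub>b \<pi>(\<theta>\<^bsub>r'\<^sub>b\<^esub> f\<^bsub>{b}\<^esub> \<theta>\<^bsub>s'\<^sub>b\<^esub>\<^sup>*)\<close>. If \<open>S\<close> is categorical at zero, \<open>\<theta>\<^sub>s f\<^sub>\<Lambda>\<close> is
  either \<open>\<theta>\<^sub>s\<close> or \<open>0\<close>, which gives the second spanning set.\<close>

lemma map_eqI: "(\<And>x y. f x = Some y \<longleftrightarrow> g x = Some y) \<Longrightarrow> f = g"
  by (rule ext) (metis option.exhaust)

lemma map_comp_restrict_Some: "m \<circ>\<^sub>m (Some |` A) = m |` A"
  by (rule ext) (simp add: restrict_map_def)

lemma restrict_Some_comp: "(Some |` A) \<circ>\<^sub>m (Some |` B) = Some |` (A \<inter> B)"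
  by (simp add: map_comp_restrict_Some Int_commute)

lemma map_comp_restrict_dom: "m \<circ>\<^sub>m (Some |` dom m) = m"
  unfolding map_comp_restrict_Some by (rule ext) (simp add: restrict_map_def domIff)

lemma pinv_SomeD: "pinv g y = Some x \<Longrightarrow> g x = Some y"
  unfolding pinv_def by (auto split: if_splits intro: someI_ex)

lemma pinv_Some:
  assumes "\<And>x x'. g x = Some y \<Longrightarrow> g x' = Some y \<Longrightarrow> x = x'"
  shows "pinv g y = Some x \<longleftrightarrow> g x = Some y"
proof
  assume "g x = Some y"
  then have "\<exists>x. g x = Some y" by blast
  then have "g (SOME x. g x = Some y) = Some y" by (rule someI_ex)
  with assms \<open>g x = Some y\<close> have "(SOME x. g x = Some y) = x" by blast
  with \<open>\<exists>x. g x = Some y\<close> show "pinv g y = Some x" unfolding pinv_def by simp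
qed (rule pinv_SomeD)

text \<open>This is how cover-to-join is used: for orthogonal subprojections \<open>Q b\<close> of \<open>p\<close> the product
  \<open>\<Prod>\<^sub>b (p - Q b)\<close> telescopes to \<open>p - \<Sum>\<^sub>b Q b\<close>.\<close>
lemma lprod_diff_orthogonal:
  fixes p :: "'b::ring"
  assumes "bs \<noteq> []" "distinct bs" "p * p = p"
    and "\<And>b. b \<in> set bs \<Longrightarrow> p * Q b = Q b \<and> Q b * p = Q b"
    and "\<And>b c. b \<in> set bs \<Longrightarrow> c \<in> set bs \<Longrightarrow> b \<noteq> c \<Longrightarrow> Q b * Q c = 0"
  shows "lprod (map (\<lambda>b. p - Q b) bs) = p - sum_list (map Q bs)"
  using assms
proof (induction bs rule: list_nonempty_induct)
  case (cons b bs)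
  have "p * sum_list (map Q bs) = sum_list (map Q bs)"
    using cons.prems(3) by (simp add: sum_list_const_mult[symmetric] cong: map_cong)
  moreover have "Q b * sum_list (map Q bs) = 0"
  proof -
    have "\<forall>c\<in>set bs. Q b * Q c = 0" using cons.prems(1,4) by force
    then show ?thesis by (simp add: sum_list_const_mult[symmetric] cong: map_cong)
  qed
  moreover have "lprod (map (\<lambda>b. p - Q b) (b # bs)) = (p - Q b) * (p - sum_list (map Q bs))"
    using cons by (cases bs) auto
  ultimately show ?case
    using cons.prems(2,3) by (simp add: algebra_simps)
qed simp

context star_algebra
begin

lemma span_mult_left_closed:
  assumes "\<And>x. x \<in> G \<Longrightarrow> a * x \<in> span G" "y \<in> span G"
  shows "a * y \<in> span G"
  using assms(2)
proof (induction rule: span_induct_alt)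
  case base
  then show ?case by (simp add: span_zero)
next
  case (step c x y)
  have "a * (sc c x + y) = sc c (a * x) + a * y" by (simp add: distrib_left sc_mult_right)
  with step assms(1) show ?case by (simp add: span_add span_scale)
qed

end

definition theta_fLam_pinv :: "'a::{semigroup_mult,mult_zero} \<Rightarrow> 'a set \<Rightarrow> 'a \<Rightarrow> 'a \<rightharpoonup> 'a" where
  "theta_fLam_pinv s L t = theta s \<circ>\<^sub>m (fLam L \<circ>\<^sub>m pinv (theta t))"

lemma theta_Some: "theta s x = Some y \<longleftrightarrow> x \<noteq> 0 \<and> s * x \<noteq> 0 \<and> y = s * x"
  by (auto simp: theta_def)

lemma fLam_Some: "fLam L x = Some y \<longleftrightarrow> y = x \<and> x \<noteq> 0 \<and> (\<forall>u\<in>L. u * x \<noteq> 0)"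
  by (auto simp: fLam_def)

locale zero_left_cancellative_semigroup =
  fixes T :: "'a::{semigroup_mult,mult_zero} itself"
  assumes zero_left_cancellative: "zero_left_cancellative T"
begin

lemma cancel_left: "s * t = s * r \<Longrightarrow> s * r \<noteq> 0 \<Longrightarrow> t = (r::'a)"
  using zero_left_cancellative unfolding zero_left_cancellative_def by metis

lemma local_unit_fixes: "s * e = s \<Longrightarrow> s * x \<noteq> 0 \<Longrightarrow> e * x = (x::'a)"
  by (metis cancel_left mult.assoc)

lemma pinv_theta_Some: "pinv (theta s) y = Some x \<longleftrightarrow> x \<noteq> 0 \<and> s * x \<noteq> 0 \<and> y = (s * x::'a)"
  by (subst pinv_Some) (auto simp: theta_Some intro: cancel_left)

lemma HS_injective: "g \<in> HS T \<Longrightarrow> g x = Some y \<Longrightarrow> g x' = Some y \<Longrightarrow> x = x'"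
proof (induction g arbitrary: x x' y rule: HS.induct)
  case (gen s)
  then show ?case by (auto simp: theta_Some intro: cancel_left)
next
  case (gen_inv s)
  then show ?case by (metis pinv_SomeD option.inject)
next
  case (comp g h)
  then show ?case by (auto simp: map_comp_Some_iff)
qed

lemma idemH_fixes: assumes "h \<in> idemH T" "h x = Some y" shows "y = x"
proof -
  from assms(1) have "h \<circ>\<^sub>m h = h" "h \<in> HS T" by (auto simp: idemH_def)
  with assms(2) have "(h \<circ>\<^sub>m h) x = Some y" by simp
  with assms(2) have "h y = Some y" by (simp add: map_comp_Some_iff)
  with \<open>h \<in> HS T\<close> assms(2) show "y = x" by (metis HS_injective)
qed

lemma fLam_HS: "finite L \<Longrightarrow> L \<noteq> {} \<Longrightarrow> fLam L \<in> HS T"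
proof (induction L rule: finite_ne_induct)
  case (singleton u)
  have "fLam {u} = pinv (theta u) \<circ>\<^sub>m theta u"
    by (rule map_eqI) (auto simp: map_comp_Some_iff fLam_Some theta_Some pinv_theta_Some
        intro: cancel_left[THEN sym])
  then show ?case by (simp add: HS.intros)
next
  case (insert u L)
  have "fLam (insert u L) = (pinv (theta u) \<circ>\<^sub>m theta u) \<circ>\<^sub>m fLam L"
    by (rule map_eqI) (auto simp: map_comp_Some_iff fLam_Some theta_Some pinv_theta_Some
        intro: cancel_left[THEN sym])
  with insert.IH show ?case by (simp add: HS.intros)
qed

lemma theta_fLam_pinv_HS: "finite L \<Longrightarrow> L \<noteq> {} \<Longrightarrow> theta_fLam_pinv s L t \<in> HS T"
  unfolding theta_fLam_pinv_def by (simp add: HS.intros fLam_HS)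

lemma theta_fLam_pinv_Some:
  "theta_fLam_pinv (s::'a) L t x = Some z \<longleftrightarrow>
     (\<exists>y. y \<noteq> 0 \<and> t * y \<noteq> 0 \<and> x = t * y \<and> (\<forall>u\<in>L. u * y \<noteq> 0) \<and> s * y \<noteq> 0 \<and> z = s * y)"
  unfolding theta_fLam_pinv_def
  by (auto simp: map_comp_Some_iff theta_Some fLam_Some pinv_theta_Some)

lemma theta_fLam_pinv_diagonal:
  "theta_fLam_pinv (t::'a) L t = Some |` {t * v | v. v \<noteq> 0 \<and> t * v \<noteq> 0 \<and> (\<forall>u\<in>L. u * v \<noteq> 0)}"
  by (rule map_eqI) (auto simp: theta_fLam_pinv_Some restrict_map_def)

lemma theta_eq_theta_fLam_pinv:
  assumes "(s::'a) * e = s"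
  shows "theta s = theta_fLam_pinv s {s, e} e"
proof (rule map_eqI)
  fix x z
  have "s * (e * y) = s * y" for y using assms by (simp add: mult.assoc[symmetric])
  moreover have "s * x \<noteq> 0 \<Longrightarrow> e * x = x" using assms by (rule local_unit_fixes)
  ultimately show "theta s x = Some z \<longleftrightarrow> theta_fLam_pinv s {s, e} e x = Some z"
    by (auto simp: theta_Some theta_fLam_pinv_Some)
qed

lemma pinv_theta_eq_theta_fLam_pinv:
  assumes "(s::'a) * e = s"
  shows "pinv (theta s) = theta_fLam_pinv e {s, e} s"
proof (rule map_eqI)
  fix x z
  have "s * y \<noteq> 0 \<Longrightarrow> e * y = y" for y using assms by (rule local_unit_fixes)
  then show "pinv (theta s) x = Some z \<longleftrightarrow> theta_fLam_pinv e {s, e} s x = Some z"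
    by (auto simp: pinv_theta_Some theta_fLam_pinv_Some)
qed

lemma theta_comp_theta_fLam_pinv:
  "theta (r::'a) \<circ>\<^sub>m theta_fLam_pinv s L t = theta_fLam_pinv (r * s) (insert (r * s) L) t"
  by (rule map_eqI) (auto simp: map_comp_Some_iff theta_fLam_pinv_Some theta_Some mult.assoc,
      metis mult_zero_right)

lemma theta_fLam_pinv_comp_fLam_pinv:
  "theta_fLam_pinv (r::'a) K s \<circ>\<^sub>m (fLam L \<circ>\<^sub>m pinv (theta t)) =
     theta_fLam_pinv r (insert r (K \<union> (\<lambda>u. u * s) ` L)) (t * s)"
proof (rule map_eqI)
  fix x z
  show "(theta_fLam_pinv r K s \<circ>\<^sub>m (fLam L \<circ>\<^sub>m pinv (theta t))) x = Some z \<longleftrightarrow>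
    theta_fLam_pinv r (insert r (K \<union> (\<lambda>u. u * s) ` L)) (t * s) x = Some z"
  proof
    assume "(theta_fLam_pinv r K s \<circ>\<^sub>m (fLam L \<circ>\<^sub>m pinv (theta t))) x = Some z"
    then obtain v where "v \<noteq> 0" "t * (s * v) \<noteq> 0" "x = t * (s * v)" "\<forall>u\<in>L. u * (s * v) \<noteq> 0"
      "\<forall>k\<in>K. k * v \<noteq> 0" "r * v \<noteq> 0" "z = r * v"
      by (auto simp: map_comp_Some_iff theta_fLam_pinv_Some fLam_Some pinv_theta_Some)
    then show "theta_fLam_pinv r (insert r (K \<union> (\<lambda>u. u * s) ` L)) (t * s) x = Some z"
      by (auto simp: theta_fLam_pinv_Some mult.assoc)
  next
    assume "theta_fLam_pinv r (insert r (K \<union> (\<lambda>u. u * s) ` L)) (t * s) x = Some z"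
    then obtain v where v: "v \<noteq> 0" "t * (s * v) \<noteq> 0" "x = t * (s * v)"
      "\<forall>u\<in>insert r (K \<union> (\<lambda>u. u * s) ` L). u * v \<noteq> 0" "z = r * v"
      by (auto simp: theta_fLam_pinv_Some mult.assoc)
    then have "s * v \<noteq> 0" by auto
    moreover from v(4) have "\<forall>u\<in>L. u * s * v \<noteq> 0" by blast
    ultimately show "(theta_fLam_pinv r K s \<circ>\<^sub>m (fLam L \<circ>\<^sub>m pinv (theta t))) x = Some z"
      using v by (auto simp: map_comp_Some_iff theta_fLam_pinv_Some fLam_Some pinv_theta_Some mult.assoc)
  qed
qed

lemma pinv_theta_comp_theta_Some:
  "(pinv (theta (r::'a)) \<circ>\<^sub>m theta s) x = Some z \<longleftrightarrow>
     x \<noteq> 0 \<and> s * x \<noteq> 0 \<and> z \<noteq> 0 \<and> r * z \<noteq> 0 \<and> s * x = r * z"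
  by (auto simp: map_comp_Some_iff theta_Some pinv_theta_Some)

lemma restrict_dom_pinv_theta_comp_theta:
  "Some |` dom (pinv (theta (r::'a)) \<circ>\<^sub>m theta s) =
     pinv (theta s) \<circ>\<^sub>m (theta r \<circ>\<^sub>m (pinv (theta r) \<circ>\<^sub>m theta s))"
proof (rule map_eqI)
  fix x y
  show "(Some |` dom (pinv (theta r) \<circ>\<^sub>m theta s)) x = Some y \<longleftrightarrow>
    (pinv (theta s) \<circ>\<^sub>m (theta r \<circ>\<^sub>m (pinv (theta r) \<circ>\<^sub>m theta s))) x = Some y"
  proof
    assume "(Some |` dom (pinv (theta r) \<circ>\<^sub>m theta s)) x = Some y"
    then show "(pinv (theta s) \<circ>\<^sub>m (theta r \<circ>\<^sub>m (pinv (theta r) \<circ>\<^sub>m theta s))) x = Some y"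
      by (auto simp: restrict_map_def dom_def map_comp_Some_iff pinv_theta_comp_theta_Some
          theta_Some pinv_theta_Some split: if_splits)
  next
    assume "(pinv (theta s) \<circ>\<^sub>m (theta r \<circ>\<^sub>m (pinv (theta r) \<circ>\<^sub>m theta s))) x = Some y"
    then obtain z where z: "(pinv (theta r) \<circ>\<^sub>m theta s) x = Some z" "s * y = r * z" "s * y \<noteq> 0"
      by (auto simp: map_comp_Some_iff theta_Some pinv_theta_Some)
    then have "s * x = s * y" by (simp add: pinv_theta_comp_theta_Some)
    then have "x = y" using z(3) by (rule cancel_left)
    with z(1) show "(Some |` dom (pinv (theta r) \<circ>\<^sub>m theta s)) x = Some y"
      by (auto simp: restrict_map_def)
  qed
qed

lemma restrict_Some_idemH: "Some |` A \<in> HS T \<Longrightarrow> Some |` A \<in> idemH T"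
  by (simp add: idemH_def restrict_Some_comp)

lemma is_cover_restrict_Some:
  assumes "\<And>b. b \<in> set bs \<Longrightarrow> Some |` D b \<in> HS T" "\<And>b. b \<in> set bs \<Longrightarrow> D b \<subseteq> E"
    and "E \<subseteq> (\<Union>b\<in>set bs. D b)"
  shows "is_cover T (Some |` E) (map (\<lambda>b. Some |` D b) bs)"
  unfolding is_cover_def
proof (intro conjI ballI impI)
  fix f assume "f \<in> set (map (\<lambda>b. Some |` D b) bs)"
  then obtain b where "b \<in> set bs" "f = Some |` D b" by auto
  with assms(1,2) show "f \<in> idemH T" "f = Some |` E \<circ>\<^sub>m f"
    by (auto simp: restrict_Some_idemH restrict_Some_comp Int_absorb1)
next
  fix h assume h: "h \<in> idemH T" "h \<noteq> Map.empty \<and> h = Some |` E \<circ>\<^sub>m h"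
  then obtain x y where "h x = Some y" by fastforce
  with h(1) have hx: "h x = Some x" using idemH_fixes by blast
  with h(2) have "x \<in> E" by (metis map_comp_simps(2) option.distinct(1) restrict_out)
  with assms(3) obtain b where "b \<in> set bs" "x \<in> D b" by blast
  with hx have "(h \<circ>\<^sub>m Some |` D b) x = Some x" by simp
  with \<open>b \<in> set bs\<close> show "\<exists>f\<in>set (map (\<lambda>b. Some |` D b) bs). h \<circ>\<^sub>m f \<noteq> Map.empty"
    by (auto intro!: bexI[of _ b])
qed

lemma categorical_domain_meets_subset:
  assumes "categorical_at_zero T" "right_local_units T"
    and "s * x \<noteq> 0" "u * x \<noteq> (0::'a)" "s * y \<noteq> 0"
  shows "u * y \<noteq> 0"
proof -
  from assms(2) obtain e where e: "s * e = s" unfolding right_local_units_def by blast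
  have "e * x = x" "e * y = y" using local_unit_fixes[OF e] assms(3,5) by blast+
  have "u * e \<noteq> 0"
  proof
    assume "u * e = 0"
    then have "u * x = 0" using \<open>e * x = x\<close> by (metis mult.assoc mult_zero_left)
    with assms(4) show False ..
  qed
  moreover have "e * y \<noteq> 0" using \<open>e * y = y\<close> assms(5) by auto
  ultimately have "u * e * y \<noteq> 0" using assms(1) unfolding categorical_at_zero_def by blast
  with \<open>e * y = y\<close> show ?thesis by (simp add: mult.assoc)
qed

lemma theta_comp_fLam_cases:
  assumes "categorical_at_zero T" "right_local_units T"
  shows "theta s \<circ>\<^sub>m fLam L = theta s \<or> theta (s::'a) \<circ>\<^sub>m fLam L = Map.empty"
proof (cases "\<forall>u\<in>L. \<forall>y. s * y \<noteq> 0 \<longrightarrow> u * y \<noteq> 0")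
  case True
  then have "theta s \<circ>\<^sub>m fLam L = theta s"
    by (intro map_eqI) (auto simp: map_comp_Some_iff theta_Some fLam_Some)
  then show ?thesis ..
next
  case False
  then obtain u y where "u \<in> L" "s * y \<noteq> 0" "u * y = 0" by blast
  have "theta s \<circ>\<^sub>m fLam L = Map.empty"
  proof
    fix x
    have "\<not> (s * x \<noteq> 0 \<and> u * x \<noteq> 0)"
      using categorical_domain_meets_subset[OF assms, of s x u y] \<open>s * y \<noteq> 0\<close> \<open>u * y = 0\<close>
      by blast
    with \<open>u \<in> L\<close> show "(theta s \<circ>\<^sub>m fLam L) x = None"
      by (auto simp: map_comp_def theta_def fLam_def)
  qed
  then show ?thesis ..
qed

context
  fixes r s :: 'a and B :: "'a set" and r' s' :: "'a \<Rightarrow> 'a"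
  assumes ideal_meet: "rideal r \<inter> rideal s = insert 0 (\<Union>b\<in>B. rideal b)"
    and ideals_disjoint: "\<forall>b\<in>B. \<forall>b'\<in>B. b \<noteq> b' \<longrightarrow> rideal b \<inter> rideal b' = {0}"
    and left_factors: "\<forall>b\<in>B. r * r' b = b" and right_factors: "\<forall>b\<in>B. s * s' b = b"
begin

lemma factors_mult: "b \<in> B \<Longrightarrow> r * (r' b * v) = b * v \<and> s * (s' b * v) = b * v"
  using left_factors right_factors by (simp add: mult.assoc[symmetric])

lemma factors_nonzero: "b \<in> B \<Longrightarrow> b * v \<noteq> 0 \<Longrightarrow> r' b * v \<noteq> 0 \<and> s' b * v \<noteq> 0"
  using factors_mult[of b v] by auto

lemma dom_pinv_theta_comp_theta:
  "dom (pinv (theta r) \<circ>\<^sub>m theta s) = (\<Union>b\<in>B. {s' b * v | v. v \<noteq> 0 \<and> b * v \<noteq> 0})"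
proof (intro equalityI subsetI)
  fix x assume "x \<in> dom (pinv (theta r) \<circ>\<^sub>m theta s)"
  then obtain z where "s * x \<noteq> 0" "s * x = r * z"
    by (auto simp: pinv_theta_comp_theta_Some)
  then have "s * x \<in> rideal r \<inter> rideal s" unfolding rideal_def by blast
  with ideal_meet \<open>s * x \<noteq> 0\<close> obtain b v where "b \<in> B" "s * x = b * v"
    by (auto simp: rideal_def)
  moreover from this factors_mult have "x = s' b * v"
    by (metis \<open>s * x \<noteq> 0\<close> cancel_left)
  moreover from calculation \<open>s * x \<noteq> 0\<close> have "v \<noteq> 0" "b * v \<noteq> 0" by auto
  ultimately show "x \<in> (\<Union>b\<in>B. {s' b * v | v. v \<noteq> 0 \<and> b * v \<noteq> 0})" by blast
next
  fix x assume "x \<in> (\<Union>b\<in>B. {s' b * v | v. v \<noteq> 0 \<and> b * v \<noteq> 0})"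
  then obtain b v where "b \<in> B" "v \<noteq> 0" "b * v \<noteq> 0" "x = s' b * v" by blast
  with factors_mult[of b v] factors_nonzero[of b v]
  show "x \<in> dom (pinv (theta r) \<circ>\<^sub>m theta s)"
    by (auto simp: dom_def pinv_theta_comp_theta_Some)
qed

lemma disjoint_family_on_cones: "disjoint_family_on (\<lambda>b. {s' b * v | v. v \<noteq> 0 \<and> b * v \<noteq> 0}) B"
  unfolding disjoint_family_on_def
proof (intro ballI impI equals0I)
  fix b c x assume bc: "b \<in> B" "c \<in> B" "b \<noteq> c"
    and "x \<in> {s' b * v | v. v \<noteq> 0 \<and> b * v \<noteq> 0} \<inter> {s' c * v | v. v \<noteq> 0 \<and> c * v \<noteq> 0}"
  then obtain v v' where v: "b * v \<noteq> 0" "x = s' b * v" "x = s' c * v'" by blast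
  have "s * x = b * v" using factors_mult[OF bc(1), of v] v(2) by simp
  moreover have "s * x = c * v'" using factors_mult[OF bc(2), of v'] v(3) by simp
  ultimately have "s * x \<in> rideal b \<inter> rideal c" "s * x \<noteq> 0"
    using v(1) unfolding rideal_def by (blast, simp)
  with ideals_disjoint bc show False by blast
qed

lemma theta_fLam_pinv_diagonal_factor:
  assumes "b \<in> B"
  shows "theta_fLam_pinv (s' b) {b} (s' b) = Some |` {s' b * v | v. v \<noteq> 0 \<and> b * v \<noteq> 0}"
proof -
  have "{s' b * v | v. v \<noteq> 0 \<and> s' b * v \<noteq> 0 \<and> (\<forall>u\<in>{b}. u * v \<noteq> 0)} =
      {s' b * v | v. v \<noteq> 0 \<and> b * v \<noteq> 0}"
    using factors_nonzero[OF assms] by auto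
  then show ?thesis by (simp only: theta_fLam_pinv_diagonal)
qed

lemma pinv_theta_comp_theta_restrict:
  assumes "b \<in> B"
  shows "(pinv (theta r) \<circ>\<^sub>m theta s) \<circ>\<^sub>m Some |` {s' b * v | v. v \<noteq> 0 \<and> b * v \<noteq> 0} =
    theta_fLam_pinv (r' b) {b} (s' b)"
  unfolding map_comp_restrict_Some
proof (rule map_eqI)
  fix x z
  show "((pinv (theta r) \<circ>\<^sub>m theta s) |` {s' b * v | v. v \<noteq> 0 \<and> b * v \<noteq> 0}) x = Some z \<longleftrightarrow>
    theta_fLam_pinv (r' b) {b} (s' b) x = Some z"
  proof
    assume "((pinv (theta r) \<circ>\<^sub>m theta s) |` {s' b * v | v. v \<noteq> 0 \<and> b * v \<noteq> 0}) x = Some z"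
    then obtain v where v: "v \<noteq> 0" "b * v \<noteq> 0" "x = s' b * v" "s * x = r * z"
      by (auto simp: restrict_map_def pinv_theta_comp_theta_Some split: if_splits)
    with factors_mult[OF assms] have "r * z = r * (r' b * v)" "r * (r' b * v) \<noteq> 0" by auto
    then have "z = r' b * v" by (rule cancel_left)
    with v factors_nonzero[OF assms v(2)] show "theta_fLam_pinv (r' b) {b} (s' b) x = Some z"
      by (auto simp: theta_fLam_pinv_Some)
  next
    assume "theta_fLam_pinv (r' b) {b} (s' b) x = Some z"
    then obtain v where "v \<noteq> 0" "b * v \<noteq> 0" "x = s' b * v" "z = r' b * v"
      by (auto simp: theta_fLam_pinv_Some)
    with factors_mult[OF assms] factors_nonzero[OF assms]
    show "((pinv (theta r) \<circ>\<^sub>m theta s) |` {s' b * v | v. v \<noteq> 0 \<and> b * v \<noteq> 0}) x = Some z"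
      by (auto simp: restrict_map_def pinv_theta_comp_theta_Some)
  qed
qed

end

end

locale cover_to_join_representation =
  star_algebra sc star + zero_left_cancellative_semigroup T
  for sc :: "complex \<Rightarrow> 'b::ring \<Rightarrow> 'b" and star :: "'b \<Rightarrow> 'b"
    and T :: "'a::{semigroup_mult,mult_zero} itself" +
  fixes \<pi> :: "('a \<rightharpoonup> 'a) \<Rightarrow> 'b"
  assumes strongly_finitely_aligned: "strongly_finitely_aligned T"
    and right_local_units: "right_local_units T"
    and star_rep: "star_rep T star \<pi>"
    and cover_to_join: "cover_to_join T \<pi>"
begin

lemma pi_comp: "g \<in> HS T \<Longrightarrow> h \<in> HS T \<Longrightarrow> \<pi> (g \<circ>\<^sub>m h) = \<pi> g * \<pi> h"
  using star_rep unfolding star_rep_def by blast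

lemma pi_pinv: "g \<in> HS T \<Longrightarrow> \<pi> (pinv g) = star (\<pi> g)"
  using star_rep unfolding star_rep_def by blast

lemma pi_empty: "\<pi> Map.empty = 0"
  using star_rep unfolding star_rep_def by blast

lemma pi_restrict_Some_partition:
  assumes "finite B" "Some |` E \<in> HS T" "\<And>b. b \<in> B \<Longrightarrow> Some |` D b \<in> HS T"
    and "E = (\<Union>b\<in>B. D b)" "disjoint_family_on D B"
  shows "\<pi> (Some |` E) = (\<Sum>b\<in>B. \<pi> (Some |` D b))"
proof (cases "B = {}")
  case True
  with assms(4) show ?thesis by (simp add: pi_empty)
next
  case False
  obtain bs where bs: "set bs = B" "distinct bs" using finite_distinct_list[OF assms(1)] by blast
  with False have "bs \<noteq> []" by auto
  have "is_cover T (Some |` E) (map (\<lambda>b. Some |` D b) bs)"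
    using assms(3,4) bs(1) by (intro is_cover_restrict_Some) auto
  with \<open>bs \<noteq> []\<close> restrict_Some_idemH[OF assms(2)] cover_to_join
  have "lprod (map (\<lambda>f. \<pi> (Some |` E) - \<pi> f) (map (\<lambda>b. Some |` D b) bs)) = 0"
    unfolding cover_to_join_def by blast
  then have "lprod (map (\<lambda>b. \<pi> (Some |` E) - \<pi> (Some |` D b)) bs) = 0"
    by (simp add: comp_def)
  moreover have "lprod (map (\<lambda>b. \<pi> (Some |` E) - \<pi> (Some |` D b)) bs) =
      \<pi> (Some |` E) - sum_list (map (\<lambda>b. \<pi> (Some |` D b)) bs)"
  proof (rule lprod_diff_orthogonal)
    show "\<pi> (Some |` E) * \<pi> (Some |` E) = \<pi> (Some |` E)"
      using pi_comp[OF assms(2,2)] by (simp add: restrict_Some_comp)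
    show "\<pi> (Some |` E) * \<pi> (Some |` D b) = \<pi> (Some |` D b) \<and>
        \<pi> (Some |` D b) * \<pi> (Some |` E) = \<pi> (Some |` D b)" if "b \<in> set bs" for b
    proof -
      from that bs(1) assms(4) have "D b \<subseteq> E" by auto
      with that bs(1) assms(2,3) show ?thesis
        by (simp add: restrict_Some_comp Int_absorb1 Int_absorb2 flip: pi_comp)
    qed
    show "\<pi> (Some |` D b) * \<pi> (Some |` D c) = 0" if "b \<in> set bs" "c \<in> set bs" "b \<noteq> c" for b c
      using that bs(1) assms(3,5) pi_empty
      by (auto simp: restrict_Some_comp disjoint_family_on_def simp flip: pi_comp)
  qed (use bs \<open>bs \<noteq> []\<close> in auto)
  ultimately have "\<pi> (Some |` E) = sum_list (map (\<lambda>b. \<pi> (Some |` D b)) bs)" by simp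
  also have "\<dots> = (\<Sum>b\<in>B. \<pi> (Some |` D b))"
    unfolding bs(1)[symmetric] by (rule sum.distinct_set_conv_list[OF bs(2), symmetric])
  finally show ?thesis .
qed

lemma aligned_factorization:
  obtains B r' s' where "finite B"
    and "rideal r \<inter> rideal s = insert 0 (\<Union>b\<in>B. rideal b)"
    and "\<forall>b\<in>B. \<forall>b'\<in>B. b \<noteq> b' \<longrightarrow> rideal b \<inter> rideal b' = {0}"
    and "\<forall>b\<in>B. r * r' b = b" and "\<forall>b\<in>B. s * s' b = (b::'a)"
proof -
  from strongly_finitely_aligned obtain B where B: "finite B"
    "rideal r \<inter> rideal s = insert 0 (\<Union>b\<in>B. rideal b)"
    "\<forall>b\<in>B. \<forall>b'\<in>B. b \<noteq> b' \<longrightarrow> rideal b \<inter> rideal b' = {0}"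
    unfolding strongly_finitely_aligned_def by (elim allE[of _ r] allE[of _ s] exE conjE)
  have "b \<in> rideal r \<inter> rideal s" if "b \<in> B" for b
  proof -
    from right_local_units obtain e where "b * e = b" unfolding right_local_units_def by blast
    then have "b \<in> rideal b" unfolding rideal_def by (intro CollectI exI[of _ e]) simp
    with that show ?thesis unfolding B(2) by blast
  qed
  then have "\<forall>b\<in>B. \<exists>x. b = r * x" "\<forall>b\<in>B. \<exists>x. b = s * x"
    unfolding rideal_def by blast+
  then obtain r' s' where "\<forall>b\<in>B. r * r' b = b" "\<forall>b\<in>B. s * s' b = b"
    by (metis bchoice)
  with B show thesis by (rule that)
qed

lemma pi_pinv_theta_comp_theta_decomposition:
  obtains B r' s' where "finite B"
    and "\<pi> (pinv (theta r) \<circ>\<^sub>m theta s) = (\<Sum>b\<in>B. \<pi> (theta_fLam_pinv (r' b) {b} (s' b)))"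
proof -
  \<comment> \<open>the domain of \<open>g = \<theta>\<^sub>r\<^sup>* \<theta>\<^sub>s\<close> is the disjoint union of the sets \<open>D b = s'\<^sub>b F\<^sub>b\<close>\<close>
  obtain B r' s' where B: "finite B" "rideal r \<inter> rideal s = insert 0 (\<Union>b\<in>B. rideal b)"
    "\<forall>b\<in>B. \<forall>b'\<in>B. b \<noteq> b' \<longrightarrow> rideal b \<inter> rideal b' = {0}"
    "\<forall>b\<in>B. r * r' b = b" "\<forall>b\<in>B. s * s' b = b"
    by (rule aligned_factorization)
  define g where "g = pinv (theta r) \<circ>\<^sub>m theta s"
  define D where "D b = {s' b * v | v. v \<noteq> 0 \<and> b * v \<noteq> 0}" for b
  have gHS: "g \<in> HS T" unfolding g_def by (simp add: HS.intros)
  have DHS: "Some |` D b \<in> HS T" if "b \<in> B" for b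
    using theta_fLam_pinv_HS[of "{b}" "s' b" "s' b"]
    unfolding D_def theta_fLam_pinv_diagonal_factor[OF B(2-5) that] by simp
  have domHS: "Some |` dom g \<in> HS T"
    unfolding g_def restrict_dom_pinv_theta_comp_theta by (simp add: HS.intros)
  have partition: "\<pi> (Some |` dom g) = (\<Sum>b\<in>B. \<pi> (Some |` D b))"
  proof (rule pi_restrict_Some_partition)
    show "dom g = (\<Union>b\<in>B. D b)" "disjoint_family_on D B"
      unfolding g_def D_def
      by (rule dom_pinv_theta_comp_theta[OF B(2-5)], rule disjoint_family_on_cones[OF B(2-5)])
  qed (use B(1) domHS DHS in auto)
  have "\<pi> g = \<pi> (g \<circ>\<^sub>m Some |` dom g)" by (simp only: map_comp_restrict_dom)
  also have "\<dots> = \<pi> g * \<pi> (Some |` dom g)" by (rule pi_comp[OF gHS domHS])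
  also have "\<dots> = (\<Sum>b\<in>B. \<pi> g * \<pi> (Some |` D b))" by (simp add: partition sum_distrib_left)
  also have "\<dots> = (\<Sum>b\<in>B. \<pi> (theta_fLam_pinv (r' b) {b} (s' b)))"
  proof (rule sum.cong)
    fix b assume "b \<in> B"
    have "\<pi> g * \<pi> (Some |` D b) = \<pi> (g \<circ>\<^sub>m Some |` D b)"
      by (rule pi_comp[OF gHS DHS[OF \<open>b \<in> B\<close>], symmetric])
    also have "g \<circ>\<^sub>m Some |` D b = theta_fLam_pinv (r' b) {b} (s' b)"
      unfolding g_def D_def by (rule pinv_theta_comp_theta_restrict[OF B(2-5) \<open>b \<in> B\<close>])
    finally show "\<pi> g * \<pi> (Some |` D b) = \<pi> (theta_fLam_pinv (r' b) {b} (s' b))" .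
  qed simp
  finally show thesis using B(1) unfolding g_def by (rule that[rotated])
qed

definition standard_elems :: "'b set" where
  "standard_elems = {\<pi> (theta_fLam_pinv s L t) | s t L. finite L \<and> s \<in> L \<and> t \<in> L}"

lemma pi_theta_fLam_pinv:
  "finite L \<Longrightarrow> L \<noteq> {} \<Longrightarrow>
     \<pi> (theta_fLam_pinv s L t) = \<pi> (theta s) * \<pi> (fLam L) * star (\<pi> (theta t))"
  unfolding theta_fLam_pinv_def by (simp add: HS.intros fLam_HS pi_comp pi_pinv mult.assoc)

lemma standard_elems_eq:
  "standard_elems = {\<pi> (theta s) * \<pi> (fLam L) * star (\<pi> (theta t)) | s t L.
     finite L \<and> s \<in> L \<and> t \<in> L}"
  unfolding standard_elems_def by (metis (lifting) empty_iff pi_theta_fLam_pinv)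

lemma standard_elemsI:
  "finite L \<Longrightarrow> s \<in> L \<Longrightarrow> t \<in> L \<Longrightarrow> \<pi> (theta_fLam_pinv s L t) \<in> standard_elems"
  unfolding standard_elems_def by blast

lemma pi_theta_in_standard_elems: "\<pi> (theta r) \<in> standard_elems"
proof -
  from right_local_units obtain e where "r * e = r" unfolding right_local_units_def by blast
  then show ?thesis by (simp add: theta_eq_theta_fLam_pinv standard_elemsI)
qed

lemma pi_pinv_theta_in_standard_elems: "\<pi> (pinv (theta r)) \<in> standard_elems"
proof -
  from right_local_units obtain e where "r * e = r" unfolding right_local_units_def by blast
  then show ?thesis by (simp add: pinv_theta_eq_theta_fLam_pinv standard_elemsI)
qed

lemma pi_theta_mult_standard_elems:
  assumes "x \<in> standard_elems"
  shows "\<pi> (theta r) * x \<in> standard_elems"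
proof -
  from assms obtain s t L where L: "finite L" "s \<in> L" "t \<in> L" "x = \<pi> (theta_fLam_pinv s L t)"
    unfolding standard_elems_def by blast
  then have "\<pi> (theta r) * x = \<pi> (theta r \<circ>\<^sub>m theta_fLam_pinv s L t)"
    by (subst pi_comp) (auto simp: HS.intros intro!: theta_fLam_pinv_HS)
  then have "\<pi> (theta r) * x = \<pi> (theta_fLam_pinv (r * s) (insert (r * s) L) t)"
    by (simp only: theta_comp_theta_fLam_pinv)
  with L show ?thesis by (simp add: standard_elemsI)
qed

lemma pi_pinv_theta_mult_standard_elems:
  assumes "x \<in> standard_elems"
  shows "\<pi> (pinv (theta r)) * x \<in> span standard_elems"
proof -
  from assms obtain s t L where L: "finite L" "s \<in> L" "t \<in> L" "x = \<pi> (theta_fLam_pinv s L t)"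
    unfolding standard_elems_def by blast
  obtain B r' s' where "finite B"
    and decomp: "\<pi> (pinv (theta r) \<circ>\<^sub>m theta s) = (\<Sum>b\<in>B. \<pi> (theta_fLam_pinv (r' b) {b} (s' b)))"
    by (rule pi_pinv_theta_comp_theta_decomposition)
  define h where "h = fLam L \<circ>\<^sub>m pinv (theta t)"
  from L have "L \<noteq> {}" by auto
  with L have hHS: "h \<in> HS T" unfolding h_def by (simp add: HS.intros fLam_HS)
  have "\<pi> (pinv (theta r)) * x = \<pi> (pinv (theta r) \<circ>\<^sub>m theta s) * \<pi> h"
    using L hHS by (auto simp: theta_fLam_pinv_def h_def pi_comp HS.intros mult.assoc)
  also have "\<dots> = (\<Sum>b\<in>B. \<pi> (theta_fLam_pinv (r' b) {b} (s' b) \<circ>\<^sub>m h))"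
    by (simp add: decomp sum_distrib_right pi_comp hHS theta_fLam_pinv_HS)
  also have "\<dots> = (\<Sum>b\<in>B. \<pi> (theta_fLam_pinv (r' b)
      (insert (r' b) ({b} \<union> (\<lambda>u. u * s' b) ` L)) (t * s' b)))"
    unfolding h_def theta_fLam_pinv_comp_fLam_pinv ..
  also have "\<dots> \<in> span standard_elems"
    using L by (intro span_sum span_base standard_elemsI) auto
  finally show ?thesis .
qed

lemma pi_mult_span_standard_elems:
  "g \<in> HS T \<Longrightarrow> y \<in> span standard_elems \<Longrightarrow> \<pi> g * y \<in> span standard_elems"
proof (induction g arbitrary: y rule: HS.induct)
  case (gen s)
  then show ?case
    using pi_theta_mult_standard_elems by (blast intro: span_mult_left_closed span_base)
next
  case (gen_inv s)
  then show ?case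
    using pi_pinv_theta_mult_standard_elems by (blast intro: span_mult_left_closed)
next
  case (comp g h)
  then show ?case by (simp add: pi_comp mult.assoc)
qed

lemma pi_HS_in_span_standard_elems: "g \<in> HS T \<Longrightarrow> \<pi> g \<in> span standard_elems"
proof (induction g rule: HS.induct)
  case (comp g h)
  then show ?case by (simp add: pi_comp pi_mult_span_standard_elems)
qed (simp_all add: span_base pi_theta_in_standard_elems pi_pinv_theta_in_standard_elems)

lemma span_standard_elems_UNIV:
  assumes "span (\<pi> ` HS T) = UNIV"
  shows "span standard_elems = UNIV"
proof -
  have "\<pi> ` HS T \<subseteq> span standard_elems" using pi_HS_in_span_standard_elems by blast
  then have "span (\<pi> ` HS T) \<subseteq> span standard_elems" by (rule span_minimal[OF _ subspace_span])
  with assms show ?thesis by blast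
qed

lemma standard_elems_subset_span_pi_theta_star:
  assumes "categorical_at_zero T"
  shows "standard_elems \<subseteq> span {\<pi> (theta s) * star (\<pi> (theta t)) | s t. True}"
proof
  fix x assume "x \<in> standard_elems"
  then obtain s t L where "finite L" "s \<in> L" "x = \<pi> (theta_fLam_pinv s L t)"
    unfolding standard_elems_def by blast
  moreover from \<open>s \<in> L\<close> have "L \<noteq> {}" by blast
  ultimately have x: "x = \<pi> (theta s \<circ>\<^sub>m fLam L) * star (\<pi> (theta t))"
    by (simp add: pi_theta_fLam_pinv pi_comp HS.intros fLam_HS)
  from theta_comp_fLam_cases[OF assms right_local_units]
  show "x \<in> span {\<pi> (theta s) * star (\<pi> (theta t)) | s t. True}"
  proof
    assume "theta s \<circ>\<^sub>m fLam L = theta s"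
    with x show ?thesis by (auto intro: span_base)
  next
    assume "theta s \<circ>\<^sub>m fLam L = Map.empty"
    with x show ?thesis by (simp add: pi_empty span_zero)
  qed
qed

end

theorem theorem15p17:
  fixes T :: "'a::{semigroup_mult,mult_zero} itself"
    and sc :: "complex \<Rightarrow> 'b::ring \<Rightarrow> 'b"
    and star :: "'b \<Rightarrow> 'b"
    and \<pi> :: "('a \<rightharpoonup> 'a) \<Rightarrow> 'b"
  assumes "strongly_finitely_aligned T"
    and "zero_left_cancellative T"
    and "right_local_units T"
    and "star_algebra sc star"
    and "star_rep T star \<pi>"
    and "cover_to_join T \<pi>"
    and "module.span sc (\<pi> ` HS T) = UNIV"
  shows "module.span sc {\<pi> (theta s) * \<pi> (fLam \<Lambda>) * star (\<pi> (theta t)) | s t \<Lambda>.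
            finite \<Lambda> \<and> s \<in> \<Lambda> \<and> t \<in> \<Lambda>} = UNIV
     \<and> (right_reductive T \<and> categorical_at_zero T \<longrightarrow>
         module.span sc {\<pi> (theta s) * star (\<pi> (theta t)) | s t::'a. True} = UNIV)"
proof -
  interpret cover_to_join_representation sc star T \<pi>
    using assms by (simp add: cover_to_join_representation_def
        cover_to_join_representation_axioms_def zero_left_cancellative_semigroup_def)
  have spans: "span standard_elems = UNIV"
    using assms(7) by (rule span_standard_elems_UNIV)
  moreover have "span {\<pi> (theta s) * star (\<pi> (theta t)) | s t. True} = UNIV"
    if "categorical_at_zero T"
    using span_mono[OF standard_elems_subset_span_pi_theta_star[OF that]] spans
    by (auto simp: span_span)
  ultimately show ?thesis by (simp add: standard_elems_eq)
qed

end
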